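(* Let $T\in\mathcal{L}(\mathcal{H})$ be a contraction with $\dim\mathcal{D}_T=\dim\mathcal{D}_{T^*}=N<\infty$, and let $V\in\mathcal{L}(\mathcal{H}')$ be unitary; put $T_1=T\oplus V$ on $\mathcal{H}\oplus\mathcal{H}'$. Suppose that the map $\tau:\mathcal{U}_T\to\mathfrak{K}$, $\mathbf{U}\mapsto\overline{W(\mathbf{U})}$, wraps $\overline{W(T)}$, where $\mathcal{U}_T$ is the set of unitary $N$-dilations of $T$ to $\mathcal{H}\oplus\mathbb{C}^N$. Then the analogous map $\tau_1:\mathcal{U}_{T_1}\to\mathfrak{K}$, $\mathbf{U}\mapsto\overline{W(\mathbf{U})}$, wraps $\overline{W(T_1)}$, where $\mathcal{U}_{T_1}$ is the set of unitary $N$-dilations of $T_1$ to $\mathcal{H}\oplus\mathcal{H}'\oplus\mathbb{C}^N$.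
   Context: For a contraction $T$, $\mathcal{D}_T=\overline{\operatorname{ran}(I-T^*T)^{1/2}}$ and $\mathcal{D}_{T^*}=\overline{\operatorname{ran}(I-TT^* )^{1/2}}$. A unitary $N$-dilation of $T\in\mathcal{L}(\mathcal{H})$ to $\mathcal{H}\oplus\mathbb{C}^N$ is a unitary $\mathbf{U}$ on $\mathcal{H}\oplus\mathbb{C}^N$ with $P_{\mathcal{H}}\mathbf{U}|_{\mathcal{H}}=T$. $W$ denotes numerical range. $\mathfrak{K}$ is the space of nonempty compact subsets of $\mathbb{C}$ with the Hausdorff distance; a map $\tau$ from a set $Y$ to $\mathfrak{K}$ wraps $A\in\mathfrak{K}$ if for every open half-plane $\mathbb{H}$ containing $A$ there exists $y\in Y$ with $\tau(y)\subset\mathbb{H}$. *)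

theory Defs
  imports "HOL-Analysis.Analysis"
begin

text \<open>A complex Hilbert space is encoded as a real Hilbert space (real inner product
space that is complete) equipped with an orthogonal complex structure \<open>iunit\<close>
(multiplication by the imaginary unit).  Complex scalar multiplication and the
complex inner product (linear in the first argument) are derived from it.\<close>

class chilbert = real_inner + complete_space +
  fixes iunit :: "'a \<Rightarrow> 'a"
  assumes iunit_add: "iunit (x + y) = iunit x + iunit y"
    and iunit_scaleR: "iunit (r *\<^sub>R x) = r *\<^sub>R iunit x"
    and iunit_iunit: "iunit (iunit x) = - x"
    and inner_iunit: "inner (iunit x) (iunit y) = inner x y"

instantiation complex :: chilbert
begin
definition iunit_complex :: "complex \<Rightarrow> complex" where "iunit_complex z = \<i> * z"
instance
  by standard (auto simp: iunit_complex_def inner_complex_def algebra_simps complex_eq_iff)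
end

instantiation prod :: (chilbert, chilbert) chilbert
begin
definition iunit_prod :: "'a \<times> 'b \<Rightarrow> 'a \<times> 'b" where
  "iunit_prod p = (iunit (fst p), iunit (snd p))"
instance
  by standard (auto simp: iunit_prod_def iunit_iunit inner_iunit inner_prod_def iunit_add iunit_scaleR)
end

instantiation vec :: (chilbert, finite) chilbert
begin
definition iunit_vec :: "'a ^ 'b \<Rightarrow> 'a ^ 'b" where
  "iunit_vec v = (\<chi> i. iunit (v $ i))"
instance
  by standard (auto simp: iunit_vec_def iunit_iunit inner_iunit inner_vec_def vec_eq_iff iunit_add iunit_scaleR)
end

definition scaleC :: "complex \<Rightarrow> 'a::chilbert \<Rightarrow> 'a" where
  "scaleC c x = Re c *\<^sub>R x + Im c *\<^sub>R iunit x"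

definition cinner :: "'a::chilbert \<Rightarrow> 'a \<Rightarrow> complex" where
  "cinner x y = Complex (inner x y) (inner x (iunit y))"

definition bounded_clinear_op :: "('a::chilbert \<Rightarrow> 'b::chilbert) \<Rightarrow> bool" where
  "bounded_clinear_op T \<longleftrightarrow> bounded_linear T \<and> (\<forall>x. T (iunit x) = iunit (T x))"

definition cadjoint :: "('a::chilbert \<Rightarrow> 'b::chilbert) \<Rightarrow> ('b \<Rightarrow> 'a)" where
  "cadjoint T = (THE S. \<forall>x y. cinner (T x) y = cinner x (S y))"

definition contraction :: "('a::chilbert \<Rightarrow> 'a) \<Rightarrow> bool" where
  "contraction T \<longleftrightarrow> bounded_clinear_op T \<and> (\<forall>x. norm (T x) \<le> norm x)"

definition unitary_op :: "('a::chilbert \<Rightarrow> 'a) \<Rightarrow> bool" where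
  "unitary_op U \<longleftrightarrow> bounded_clinear_op U \<and> U \<circ> cadjoint U = id \<and> cadjoint U \<circ> U = id"

definition positive_op :: "('a::chilbert \<Rightarrow> 'a) \<Rightarrow> bool" where
  "positive_op A \<longleftrightarrow> bounded_clinear_op A \<and> (\<forall>x. cinner (A x) x \<in> \<real> \<and> 0 \<le> Re (cinner (A x) x))"

definition op_sqrt :: "('a::chilbert \<Rightarrow> 'a) \<Rightarrow> ('a \<Rightarrow> 'a)" where
  "op_sqrt A = (THE S. positive_op S \<and> S \<circ> S = A)"

definition defect_space :: "('a::chilbert \<Rightarrow> 'a) \<Rightarrow> 'a set" where
  "defect_space T = closure (range (op_sqrt (\<lambda>x. x - cadjoint T (T x))))"

definition defect_space_adj :: "('a::chilbert \<Rightarrow> 'a) \<Rightarrow> 'a set" where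
  "defect_space_adj T = closure (range (op_sqrt (\<lambda>x. x - T (cadjoint T x))))"

definition cindependent :: "'a::chilbert set \<Rightarrow> bool" where
  "cindependent B \<longleftrightarrow> (\<forall>F c. finite F \<and> F \<subseteq> B \<and> (\<Sum>b\<in>F. scaleC (c b) b) = 0 \<longrightarrow> (\<forall>b\<in>F. c b = 0))"

definition cspan :: "'a::chilbert set \<Rightarrow> 'a set" where
  "cspan B = {\<Sum>b\<in>F. scaleC (c b) b | F c. finite F \<and> F \<subseteq> B}"

definition has_cdim :: "'a::chilbert set \<Rightarrow> nat \<Rightarrow> bool" where
  "has_cdim S N \<longleftrightarrow> (\<exists>B. finite B \<and> card B = N \<and> cindependent B \<and> cspan B = S)"

definition num_range :: "('a::chilbert \<Rightarrow> 'a) \<Rightarrow> complex set" where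
  "num_range T = {cinner (T x) x | x. norm x = 1}"

text \<open>Unitary \<open>N\<close>-dilations of \<open>T\<close> to \<open>\<H> \<oplus> E\<close> (with \<open>E = \<complex>^N\<close> in the application):
unitaries \<open>U\<close> on \<open>\<H> \<times> E\<close> with \<open>P_\<H> U|_\<H> = T\<close>.\<close>
definition unitary_dilations :: "('a::chilbert \<Rightarrow> 'a) \<Rightarrow> (('a \<times> 'e::chilbert) \<Rightarrow> ('a \<times> 'e)) set" where
  "unitary_dilations T = {U. unitary_op U \<and> (\<forall>x. fst (U (x, 0)) = T x)}"

definition open_halfplane :: "complex set \<Rightarrow> bool" where
  "open_halfplane P \<longleftrightarrow> (\<exists>a b. a \<noteq> 0 \<and> P = {z. Re (a * z) < b})"

definition wraps :: "('y \<Rightarrow> complex set) \<Rightarrow> 'y set \<Rightarrow> complex set \<Rightarrow> bool" where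
  "wraps \<tau> Y A \<longleftrightarrow> (\<forall>P. open_halfplane P \<and> A \<subseteq> P \<longrightarrow> (\<exists>y\<in>Y. \<tau> y \<subseteq> P))"

end

theory Submission imports Defs begin

(* Let P = {z. Re (a*z) < b} be an open half-plane containing the closed
   numerical range of T1 = T \<oplus> V.  Since W(T) \<subseteq> W(T1), the hypothesis provides a unitary
   N-dilation U of T whose closed numerical range lies in P; also W(V) \<subseteq> W(T1).  By
   compactness both closure W(U) and closure W(V) lie in a closed half-plane
   {Re (a*z) \<le> c} with c < b.  The operator U1 = U \<oplus> V, acting on (H \<times> H') \<times> \<complex>^N, is a unitary N-dilation of
   T1, and its quadratic form is the sum of those of U and V, so W(U1) is again in
   {Re (a*z) \<le> c} \<subseteq> P.
   The file first proves the Riesz representation theorem (through nearest points in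
   closed convex sets), which yields existence of adjoints and hence that U \<oplus> V is
   unitary; then it collects the needed facts on numerical ranges; the theorem comes
   last.  The hypotheses on the defect dimensions only fix the setting (N = dim D_T):
   the argument does not use them. *)

lemma parallelogram_midpoint:
  fixes x a b :: "'a::real_inner"
  shows "(norm (a - b))\<^sup>2
       = 2 * (norm (x - a))\<^sup>2 + 2 * (norm (x - b))\<^sup>2 - 4 * (norm (x - (1/2) *\<^sub>R (a + b)))\<^sup>2"
  by (simp add: power2_norm_eq_inner inner_diff_left inner_diff_right inner_add_left
      inner_add_right inner_commute algebra_simps)

(* A sequence in a convex set whose squared distances to x approach the infimum d is
   Cauchy, by the parallelogram law applied to the midpoint of two of its terms. *)
lemma minimizing_sequence_Cauchy:
  fixes M :: "'a::real_inner set"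
  assumes M: "convex M" and sM: "\<And>n. s n \<in> M"
    and d: "\<And>m. m \<in> M \<Longrightarrow> d \<le> (norm (x - m))\<^sup>2"
    and sd: "\<And>n. (norm (x - s n))\<^sup>2 < d + 1 / real (Suc n)"
  shows "Cauchy s"
proof (rule metric_CauchyI)
  have close: "(dist (s i) (s j))\<^sup>2 \<le> 2 / real (Suc i) + 2 / real (Suc j)" for i j
  proof -
    have "(1/2) *\<^sub>R s i + (1/2) *\<^sub>R s j \<in> M"
      using convexD[OF M sM sM] by simp
    then have "d \<le> (norm (x - (1/2) *\<^sub>R (s i + s j)))\<^sup>2"
      using d by (simp add: scaleR_right_distrib)
    then show ?thesis
      using parallelogram_midpoint[of "s i" "s j" x] sd[of i] sd[of j] by (simp add: dist_norm)
  qed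
  fix e :: real assume e: "e > 0"
  obtain N where N: "4 / e\<^sup>2 < real N" using reals_Archimedean2 by blast
  have "4 < e\<^sup>2 * real N" using N e by (simp add: divide_less_eq mult.commute)
  also have "\<dots> \<le> e\<^sup>2 * real (Suc N)" by (rule mult_left_mono) simp_all
  finally have "4 / real (Suc N) < e\<^sup>2" by (simp add: divide_less_eq)
  show "\<exists>M. \<forall>m\<ge>M. \<forall>n\<ge>M. dist (s m) (s n) < e"
  proof (intro exI allI impI)
    fix i j assume "N \<le> i" "N \<le> j"
    then have "2 / real (Suc i) \<le> 2 / real (Suc N)" "2 / real (Suc j) \<le> 2 / real (Suc N)"
      by (simp_all add: frac_le)
    then have "(dist (s i) (s j))\<^sup>2 < e\<^sup>2"
      using close[of i j] \<open>4 / real (Suc N) < e\<^sup>2\<close> by linarith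
    then show "dist (s i) (s j) < e" using e by (simp add: power_less_imp_less_base)
  qed
qed

(* Every nonempty closed convex subset of a real Hilbert space has a point nearest to x:
   the limit of a minimizing sequence. *)
lemma nearest_point_exists:
  fixes M :: "'a::{real_inner,complete_space} set"
  assumes cl: "closed M" and cv: "convex M" and ne: "M \<noteq> {}"
  shows "\<exists>p\<in>M. \<forall>m\<in>M. norm (x - p) \<le> norm (x - m)"
proof -
  define d where "d = Inf ((\<lambda>m. (norm (x - m))\<^sup>2) ` M)"
  have bdd: "bdd_below ((\<lambda>m. (norm (x - m))\<^sup>2) ` M)" by (rule bdd_belowI[of _ 0]) auto
  have d_le: "d \<le> (norm (x - m))\<^sup>2" if "m \<in> M" for m
    unfolding d_def using bdd that by (auto intro: cInf_lower)
  have "\<exists>m\<in>M. (norm (x - m))\<^sup>2 < d + 1 / real (Suc n)" for n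
  proof -
    have "Inf ((\<lambda>m. (norm (x - m))\<^sup>2) ` M) < d + 1 / real (Suc n)" by (simp add: d_def)
    then show ?thesis using ne by (subst (asm) cInf_less_iff[OF _ bdd]) auto
  qed
  then obtain s where sM: "\<And>n. s n \<in> M"
    and sd: "\<And>n. (norm (x - s n))\<^sup>2 < d + 1 / real (Suc n)"
    by metis
  obtain p where lim: "s \<longlonglongrightarrow> p"
    using minimizing_sequence_Cauchy[OF cv sM d_le sd] convergent_eq_Cauchy
    by (auto simp: convergent_def)
  have pM: "p \<in> M" using cl sM lim closed_sequentially by blast
  have "(\<lambda>n. (norm (x - s n))\<^sup>2) \<longlonglongrightarrow> (norm (x - p))\<^sup>2"
    by (intro tendsto_intros lim)
  moreover have "(\<lambda>n. d + 1 / real (Suc n)) \<longlonglongrightarrow> d"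
    using tendsto_add[OF tendsto_const[of d] LIMSEQ_Suc[OF lim_inverse_n']]
    by (simp add: inverse_eq_divide)
  ultimately have "(norm (x - p))\<^sup>2 \<le> d"
    by (rule LIMSEQ_le) (use sd in \<open>auto intro: less_imp_le\<close>)
  then have "(norm (x - p))\<^sup>2 \<le> (norm (x - m))\<^sup>2" if "m \<in> M" for m
    using d_le[OF that] by linarith
  then show ?thesis
    using pM by (auto intro: power2_le_imp_le)
qed

(* The nearest point p of a subspace M to x is its orthogonal projection: x - p \<perp> M.
   Otherwise moving p along some m \<in> M would decrease the distance. *)
lemma nearest_point_orthogonal:
  fixes M :: "'a::real_inner set"
  assumes M: "subspace M" and pM: "p \<in> M" and mM: "m \<in> M"
    and nearest: "\<And>m. m \<in> M \<Longrightarrow> norm (x - p) \<le> norm (x - m)"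
  shows "inner (x - p) m = 0"
proof -
  define c where "c = inner (x - p) m"
  define k where "k = (norm m)\<^sup>2"
  have variation: "2 * t * c \<le> t\<^sup>2 * k" for t
  proof -
    have "p + t *\<^sub>R m \<in> M" using pM mM M by (simp add: subspace_add subspace_scale)
    then have "(norm (x - p))\<^sup>2 \<le> (norm (x - (p + t *\<^sub>R m)))\<^sup>2"
      using nearest by (simp add: power_mono)
    also have "\<dots> = (norm (x - p))\<^sup>2 - 2 * t * c + t\<^sup>2 * k"
      unfolding c_def k_def power2_norm_eq_inner
      by (simp add: inner_diff_left inner_diff_right inner_add_left inner_add_right
          inner_commute algebra_simps power2_eq_square)
    finally show ?thesis by simp
  qed
  show ?thesis
  proof (cases "k = 0")
    case True
    then show ?thesis by (simp add: k_def c_def)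
  next
    case False
    then have k: "k > 0" by (simp add: k_def)
    have "2 * (c / k) * c \<le> (c / k)\<^sup>2 * k" by (rule variation)
    then have "c\<^sup>2 / k \<le> 0"
      using k by (simp add: power2_eq_square field_simps)
    then show ?thesis
      using k by (simp add: c_def divide_le_0_iff)
  qed
qed

(* Riesz: every bounded linear functional on a real Hilbert space is an inner product
   against a fixed vector.  It provides the adjoint of a bounded operator. *)
lemma riesz_representation:
  fixes f :: "'a::{real_inner,complete_space} \<Rightarrow> real"
  assumes f: "bounded_linear f"
  shows "\<exists>z. \<forall>x. f x = inner x z"
proof (cases "\<forall>x. f x = 0")
  case True
  then show ?thesis by (intro exI[of _ 0]) simp
next
  case False
  then obtain y where fy: "f y \<noteq> 0" by blast
  interpret f: bounded_linear f by (rule f)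
  define M where "M = {x. f x = 0}"
  have M_closed: "closed M" unfolding M_def
    by (intro closed_Collect_eq continuous_intros f.continuous_on)
  have M_subspace: "subspace M" unfolding M_def subspace_def
    by (auto simp: f.add f.scale f.zero)
  then have "M \<noteq> {}" by (auto dest: subspace_0)
  then obtain p where pM: "p \<in> M" and nearest: "\<And>m. m \<in> M \<Longrightarrow> norm (y - p) \<le> norm (y - m)"
    using nearest_point_exists[OF M_closed subspace_imp_convex[OF M_subspace]] by blast
  define w where "w = y - p"
  have orth: "inner w m = 0" if "m \<in> M" for m
    unfolding w_def using nearest_point_orthogonal[OF M_subspace pM that nearest] .
  have fw: "f w = f y" using pM by (simp add: w_def M_def f.diff)
  then have ww: "inner w w \<noteq> 0" using fy f.zero by auto
  show ?thesis
  proof (intro exI allI)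
    fix x
    have "x - (f x / f w) *\<^sub>R w \<in> M" using fw fy by (simp add: M_def f.diff f.scale)
    then have "inner w (x - (f x / f w) *\<^sub>R w) = 0" by (rule orth)
    then have "inner w x = (f x / f w) * inner w w" by (simp add: inner_diff_right)
    then show "f x = inner x ((f w / inner w w) *\<^sub>R w)"
      using ww fw fy by (simp add: inner_commute field_simps)
  qed
qed

lemma inner_iunit_swap: "inner (a::'a::chilbert) (iunit b) = - inner (iunit a) b"
  using inner_iunit[of a "iunit b"] by (simp add: iunit_iunit)

lemma norm_iunit [simp]: "norm (iunit x) = norm (x::'a::chilbert)"
  by (simp add: norm_eq_sqrt_inner inner_iunit)

lemma cinner_zero_left [simp]: "cinner 0 x = 0"
  by (simp add: cinner_def complex_eq_iff)

lemma cinner_Pair: "cinner (a, b) (c, d) = cinner a c + cinner b d"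
  by (simp add: cinner_def inner_prod_def iunit_prod_def complex_eq_iff)

lemma cinner_scaleR: "cinner (r *\<^sub>R x) (r *\<^sub>R y) = of_real (r * r) * cinner x y"
  by (simp add: cinner_def iunit_scaleR complex_eq_iff)

(* Crude Cauchy-Schwarz bound, enough for boundedness of numerical ranges. *)
lemma norm_cinner_le: "norm (cinner x y) \<le> 2 * (norm x * norm (y::'a::chilbert))"
proof -
  have "norm (cinner x y) \<le> \<bar>inner x y\<bar> + \<bar>inner x (iunit y)\<bar>"
    using cmod_le[of "cinner x y"] by (simp add: cinner_def)
  also have "\<dots> \<le> norm x * norm y + norm x * norm (iunit y)"
    by (intro add_mono Cauchy_Schwarz_ineq2)
  finally show ?thesis by simp
qed

(* The adjoint of a bounded complex-linear operator exists (via Riesz applied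
   to the real part of the form; the imaginary part follows from complex linearity), is
   unique, and therefore coincides with cadjoint. *)

definition is_adjoint :: "('a::chilbert \<Rightarrow> 'b::chilbert) \<Rightarrow> ('b \<Rightarrow> 'a) \<Rightarrow> bool" where
  "is_adjoint T S \<longleftrightarrow> (\<forall>x y. cinner (T x) y = cinner x (S y))"

lemma adjoint_exists:
  fixes T :: "'a::chilbert \<Rightarrow> 'b::chilbert"
  assumes "bounded_clinear_op T"
  shows "\<exists>S. is_adjoint T S"
proof -
  have T: "bounded_linear T" and T_iunit: "\<And>x. T (iunit x) = iunit (T x)"
    using assms by (auto simp: bounded_clinear_op_def)
  have "\<exists>z. \<forall>x. inner (T x) y = inner x z" for y
    using bounded_linear_compose[OF bounded_linear_inner_left T]
    by (intro riesz_representation) simp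
  then obtain S where S: "\<And>x y. inner (T x) y = inner x (S y)" by metis
  have "inner x (iunit (S y)) = inner (T x) (iunit y)" for x y
  proof -
    have "inner x (iunit (S y)) = - inner (T (iunit x)) y" by (simp add: inner_iunit_swap S)
    also have "\<dots> = inner (T x) (iunit y)" by (simp add: T_iunit inner_iunit_swap)
    finally show ?thesis .
  qed
  then show ?thesis
    by (intro exI[of _ S]) (simp add: is_adjoint_def cinner_def S)
qed

lemma adjoint_unique:
  assumes "is_adjoint T S" "is_adjoint T S'"
  shows "S = S'"
proof
  fix y
  have "inner x (S y) = inner x (S' y)" for x
    using assms unfolding is_adjoint_def by (metis cinner_def complex.inject)
  from this[of "S y - S' y"] have "inner (S y - S' y) (S y - S' y) = 0"
    by (simp only: inner_diff_right)
  then show "S y = S' y" by simp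
qed

lemma cadjoint_eqI: "is_adjoint T S \<Longrightarrow> cadjoint T = S"
  unfolding cadjoint_def by (rule the_equality) (use adjoint_unique is_adjoint_def in blast)+

lemma is_adjoint_cadjoint: "bounded_clinear_op T \<Longrightarrow> is_adjoint T (cadjoint T)"
  using adjoint_exists cadjoint_eqI by blast

definition sum_dilation ::
    "('h::chilbert \<times> 'e::chilbert \<Rightarrow> 'h \<times> 'e) \<Rightarrow> ('k::chilbert \<Rightarrow> 'k) \<Rightarrow> ('h \<times> 'k) \<times> 'e \<Rightarrow> ('h \<times> 'k) \<times> 'e"
  where "sum_dilation U V z =
    ((fst (U (fst (fst z), snd z)), V (snd (fst z))), snd (U (fst (fst z), snd z)))"

lemma sum_dilation_simp [simp]:
  "sum_dilation U V ((x, y), e) = ((fst (U (x, e)), V y), snd (U (x, e)))"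
  by (simp add: sum_dilation_def)

lemma sum_dilation_comp: "sum_dilation U V \<circ> sum_dilation U' V' = sum_dilation (U \<circ> U') (V \<circ> V')"
  by (rule ext) (simp add: sum_dilation_def)

lemma sum_dilation_id: "sum_dilation id id = id"
  by (rule ext) (simp add: sum_dilation_def)

lemma cinner_sum_dilation:
  "cinner (sum_dilation U V ((x, y), e)) ((x', y'), e')
     = cinner (U (x, e)) (x', e') + cinner (V y) y'"
  by (simp add: cinner_Pair) (metis cinner_Pair prod.collapse)

lemma bounded_clinear_op_sum_dilation:
  fixes U :: "'h::chilbert \<times> 'e::chilbert \<Rightarrow> 'h \<times> 'e" and V :: "'k::chilbert \<Rightarrow> 'k"
  assumes U: "bounded_clinear_op U" and V: "bounded_clinear_op V"
  shows "bounded_clinear_op (sum_dilation U V)"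
proof -
  have U_lin: "bounded_linear U" and U_iunit: "\<And>x. U (iunit x) = iunit (U x)"
    and V_lin: "bounded_linear V" and V_iunit: "\<And>x. V (iunit x) = iunit (V x)"
    using U V by (auto simp: bounded_clinear_op_def)
  have "bounded_linear (\<lambda>z::('h \<times> 'k) \<times> 'e. (fst (fst z), snd z))"
    by (intro bounded_linear_Pair bounded_linear_compose[OF bounded_linear_fst bounded_linear_fst]
        bounded_linear_snd)
  from bounded_linear_compose[OF U_lin this]
  have U': "bounded_linear (\<lambda>z::('h \<times> 'k) \<times> 'e. U (fst (fst z), snd z))" by simp
  have V': "bounded_linear (\<lambda>z::('h \<times> 'k) \<times> 'e. V (snd (fst z)))"
    using bounded_linear_compose[OF V_lin bounded_linear_compose[OF bounded_linear_snd bounded_linear_fst]]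
    by simp
  have "bounded_linear (sum_dilation U V)"
    unfolding sum_dilation_def[abs_def]
    by (intro bounded_linear_Pair bounded_linear_compose[OF bounded_linear_fst U']
        bounded_linear_compose[OF bounded_linear_snd U'] V')
  moreover have "sum_dilation U V (iunit z) = iunit (sum_dilation U V z)" for z
  proof -
    obtain x y e where z: "z = ((x, y), e)" by (metis prod.collapse)
    have "U (iunit x, iunit e) = iunit (U (x, e))"
      using U_iunit[of "(x, e)"] by (simp add: iunit_prod_def)
    then show ?thesis using z by (simp add: iunit_prod_def V_iunit)
  qed
  ultimately show ?thesis by (simp add: bounded_clinear_op_def)
qed

lemma is_adjoint_sum_dilation:
  fixes U U' :: "'h::chilbert \<times> 'e::chilbert \<Rightarrow> 'h \<times> 'e" and V V' :: "'k::chilbert \<Rightarrow> 'k"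
  assumes U: "is_adjoint U U'" and V: "is_adjoint V V'"
  shows "is_adjoint (sum_dilation U V) (sum_dilation U' V')"
  unfolding is_adjoint_def
proof (intro allI)
  fix z w :: "('h \<times> 'k) \<times> 'e"
  obtain x y e where z: "z = ((x, y), e)" by (metis prod.collapse)
  obtain x' y' e' where w: "w = ((x', y'), e')" by (metis prod.collapse)
  have "cinner (U (x, e)) (x', e') = cinner (x, e) (U' (x', e'))"
    and "cinner (V y) y' = cinner y (V' y')"
    using U V by (simp_all add: is_adjoint_def)
  then show "cinner (sum_dilation U V z) w = cinner z (sum_dilation U' V' w)"
    using z w by (simp add: cinner_sum_dilation cinner_Pair) (metis cinner_Pair prod.collapse)
qed

lemma unitary_sum_dilation:
  assumes U: "unitary_op U" and V: "unitary_op V"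
  shows "unitary_op (sum_dilation U V)"
proof -
  have U_bcl: "bounded_clinear_op U" and V_bcl: "bounded_clinear_op V"
    using U V by (auto simp: unitary_op_def)
  have "cadjoint (sum_dilation U V) = sum_dilation (cadjoint U) (cadjoint V)"
    by (intro cadjoint_eqI is_adjoint_sum_dilation is_adjoint_cadjoint U_bcl V_bcl)
  then show ?thesis
    using U V bounded_clinear_op_sum_dilation[OF U_bcl V_bcl]
    by (simp add: unitary_op_def sum_dilation_comp sum_dilation_id)
qed

lemma sum_dilation_unitary_dilation:
  assumes "U \<in> unitary_dilations T" and "unitary_op V"
  shows "sum_dilation U V \<in> unitary_dilations (map_prod T V)"
  using assms by (auto simp: unitary_dilations_def unitary_sum_dilation)

lemma norm_Pair_squared: "(norm (a, b))\<^sup>2 = (norm a)\<^sup>2 + (norm b)\<^sup>2"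
  by (simp add: norm_Pair)

(* The numerical range of a bounded operator is bounded, so its closure is compact. *)
lemma num_range_bounded:
  fixes A :: "'a::chilbert \<Rightarrow> 'a"
  assumes "bounded_linear A"
  shows "bounded (num_range A)"
proof -
  obtain K where K: "\<And>x. norm (A x) \<le> norm x * K"
    using bounded_linear.bounded[OF assms] by blast
  have "norm (cinner (A x) x) \<le> 2 * K" if "norm x = 1" for x
    using norm_cinner_le[of "A x" x] K[of x] that by simp
  then show ?thesis by (auto simp: bounded_iff num_range_def)
qed

(* A closed numerical range inside an open half-plane stays inside a strictly smaller
   closed half-plane, by compactness. *)
lemma num_range_halfplane_margin:
  fixes A :: "'a::chilbert \<Rightarrow> 'a"
  assumes "bounded_linear A" and sub: "closure (num_range A) \<subseteq> {z. Re (a * z) < b}"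
  shows "\<exists>c<b. num_range A \<subseteq> {z. Re (a * z) \<le> c}"
proof (cases "num_range A = {}")
  case True
  then show ?thesis by (intro exI[of _ "b - 1"]) auto
next
  case False
  define K where "K = (\<lambda>z. Re (a * z)) ` closure (num_range A)"
  have "compact K"
    using num_range_bounded[OF assms(1)] unfolding K_def
    by (intro compact_continuous_image continuous_intros) (simp add: compact_closure)
  moreover have "K \<noteq> {}" using False by (simp add: K_def)
  ultimately obtain m where m: "m \<in> K" and m_max: "\<And>y. y \<in> K \<Longrightarrow> y \<le> m"
    by (metis compact_attains_sup)
  have "m < b" using m sub unfolding K_def by blast
  moreover have "num_range A \<subseteq> {z. Re (a * z) \<le> m}"
  proof
    fix z assume "z \<in> num_range A"
    then have "Re (a * z) \<in> K" unfolding K_def using closure_subset by blast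
    then show "z \<in> {z. Re (a * z) \<le> m}" using m_max by simp
  qed
  ultimately show ?thesis by blast
qed

lemma quadratic_form_halfplane_bound:
  fixes A :: "'a::chilbert \<Rightarrow> 'a"
  assumes A: "linear A" and W: "num_range A \<subseteq> {z. Re (a * z) \<le> c}"
  shows "Re (a * cinner (A x) x) \<le> c * (norm x)\<^sup>2"
proof (cases "x = 0")
  case True
  then show ?thesis using linear_0[OF A] by simp
next
  case False
  define u where "u = (1 / norm x) *\<^sub>R x"
  have u: "norm u = 1" and x: "x = norm x *\<^sub>R u" using False by (simp_all add: u_def)
  have "cinner (A x) x = of_real (norm x * norm x) * cinner (A u) u"
    using cinner_scaleR[of "norm x" "A u" u] x linear_cmul[OF A] by metis
  then have "Re (a * cinner (A x) x) = (norm x * norm x) * Re (a * cinner (A u) u)"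
    by (simp add: algebra_simps)
  also have "\<dots> \<le> (norm x * norm x) * c"
    using W u by (intro mult_left_mono) (auto simp: num_range_def)
  finally show ?thesis by (simp add: power2_eq_square algebra_simps)
qed

lemma num_range_map_prod:
  assumes "linear T" "linear V"
  shows "num_range T \<union> num_range V \<subseteq> num_range (map_prod T V)"
proof -
  have "cinner (T x) x \<in> num_range (map_prod T V)" if "norm x = 1" for x
    using that linear_0[OF assms(2)] unfolding num_range_def
    by (intro CollectI exI[of _ "(x, 0)"]) (simp add: cinner_Pair norm_Pair)
  moreover have "cinner (V y) y \<in> num_range (map_prod T V)" if "norm y = 1" for y
    using that linear_0[OF assms(1)] unfolding num_range_def
    by (intro CollectI exI[of _ "(0, y)"]) (simp add: cinner_Pair norm_Pair)
  ultimately show ?thesis by (auto simp: num_range_def)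
qed

(* A closed half-plane containing the numerical ranges of U and V contains that of U \<oplus> V,
   since the quadratic form of U \<oplus> V is the sum of theirs. *)
lemma num_range_sum_dilation:
  fixes U :: "'h::chilbert \<times> 'e::chilbert \<Rightarrow> 'h \<times> 'e" and V :: "'k::chilbert \<Rightarrow> 'k"
  assumes "linear U" "linear V"
    and U: "num_range U \<subseteq> {z. Re (a * z) \<le> c}" and V: "num_range V \<subseteq> {z. Re (a * z) \<le> c}"
  shows "num_range (sum_dilation U V) \<subseteq> {z. Re (a * z) \<le> c}"
proof
  fix w assume "w \<in> num_range (sum_dilation U V)"
  then obtain z where w: "w = cinner (sum_dilation U V z) z" and norm1: "norm z = 1"
    by (auto simp: num_range_def)
  obtain x y e where z: "z = ((x, y), e)" by (metis prod.collapse)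
  have "w = cinner (U (x, e)) (x, e) + cinner (V y) y"
    unfolding w z by (rule cinner_sum_dilation)
  then have "Re (a * w) = Re (a * cinner (U (x, e)) (x, e)) + Re (a * cinner (V y) y)"
    by (simp add: distrib_left)
  also have "\<dots> \<le> c * (norm (x, e))\<^sup>2 + c * (norm y)\<^sup>2"
    using quadratic_form_halfplane_bound[OF assms(1) U] quadratic_form_halfplane_bound[OF assms(2) V]
    by (rule add_mono)
  also have "\<dots> = c * (norm z)\<^sup>2" unfolding z by (simp add: norm_Pair_squared distrib_left)
  finally show "w \<in> {z. Re (a * z) \<le> c}" using norm1 by simp
qed

lemma closure_num_range_sum_dilation:
  fixes U :: "'h::chilbert \<times> 'e::chilbert \<Rightarrow> 'h \<times> 'e" and V :: "'k::chilbert \<Rightarrow> 'k"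
  assumes U: "bounded_linear U" and V: "bounded_linear V"
    and W_U: "closure (num_range U) \<subseteq> {z. Re (a * z) < b}"
    and W_V: "closure (num_range V) \<subseteq> {z. Re (a * z) < b}"
  shows "closure (num_range (sum_dilation U V)) \<subseteq> {z. Re (a * z) < b}"
proof -
  obtain c1 where "c1 < b" and c1: "num_range U \<subseteq> {z. Re (a * z) \<le> c1}"
    using num_range_halfplane_margin[OF U W_U] by blast
  obtain c2 where "c2 < b" and c2: "num_range V \<subseteq> {z. Re (a * z) \<le> c2}"
    using num_range_halfplane_margin[OF V W_V] by blast
  define c where "c = max c1 c2"
  have "num_range U \<subseteq> {z. Re (a * z) \<le> c}" "num_range V \<subseteq> {z. Re (a * z) \<le> c}"
    using c1 c2 by (auto simp: c_def)
  then have "num_range (sum_dilation U V) \<subseteq> {z. Re (a * z) \<le> c}"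
    by (intro num_range_sum_dilation bounded_linear.linear U V)
  then have "closure (num_range (sum_dilation U V)) \<subseteq> {z. Re (a * z) \<le> c}"
    by (intro closure_minimal closed_Collect_le continuous_intros)
  also have "\<dots> \<subseteq> {z. Re (a * z) < b}"
    using \<open>c1 < b\<close> \<open>c2 < b\<close> by (auto simp: c_def)
  finally show ?thesis .
qed

theorem lemma6p1:
  fixes T :: "'h::chilbert \<Rightarrow> 'h" and V :: "'k::chilbert \<Rightarrow> 'k" and N :: nat
  assumes "contraction T"
    and "N = CARD('n::finite)"
    and "has_cdim (defect_space T) N"
    and "has_cdim (defect_space_adj T) N"
    and "unitary_op V"
    and "wraps (\<lambda>U. closure (num_range U))
           (unitary_dilations T :: ('h \<times> (complex ^ 'n) \<Rightarrow> 'h \<times> (complex ^ 'n)) set)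
           (closure (num_range T))"
  shows "wraps (\<lambda>U. closure (num_range U))
           (unitary_dilations (map_prod T V) :: (('h \<times> 'k) \<times> (complex ^ 'n) \<Rightarrow> ('h \<times> 'k) \<times> (complex ^ 'n)) set)
           (closure (num_range (map_prod T V)))"
  unfolding wraps_def
proof (intro allI impI)
  fix P assume P_wraps: "open_halfplane P \<and> closure (num_range (map_prod T V)) \<subseteq> P"
  then obtain a b where P: "P = {z. Re (a * z) < b}" unfolding open_halfplane_def by blast
  have T: "bounded_linear T" and V: "bounded_linear V"
    using assms(1,5) by (auto simp: contraction_def unitary_op_def bounded_clinear_op_def)
  have "num_range T \<union> num_range V \<subseteq> num_range (map_prod T V)"
    using num_range_map_prod[OF bounded_linear.linear[OF T] bounded_linear.linear[OF V]] .
  then have "closure (num_range T) \<subseteq> P" and W_V: "closure (num_range V) \<subseteq> P"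
    using P_wraps closure_mono[of _ "num_range (map_prod T V)"] by blast+
  then obtain U :: "'h \<times> (complex ^ 'n) \<Rightarrow> 'h \<times> (complex ^ 'n)"
    where U: "U \<in> unitary_dilations T" and W_U: "closure (num_range U) \<subseteq> P"
    using assms(6) P_wraps unfolding wraps_def by blast
  have "bounded_linear U"
    using U by (simp add: unitary_dilations_def unitary_op_def bounded_clinear_op_def)
  then have "closure (num_range (sum_dilation U V)) \<subseteq> P"
    using closure_num_range_sum_dilation V W_U W_V P by blast
  then show "\<exists>U1 \<in> unitary_dilations (map_prod T V) :: (('h \<times> 'k) \<times> (complex ^ 'n) \<Rightarrow> _) set.
      closure (num_range U1) \<subseteq> P"
    using sum_dilation_unitary_dilation[OF U assms(5)] by blast
qed

end
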